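(* Let us consider a fragment, $F$, that entered the work state for two consecutive times, $i$ and $i+1$ and remained active. Let $t_{i}$ be the time it entered the work state for the $i$-th time, and let $t_{i+1}$ be the $i+1$ time. Let us define by $k_i$ its known size at time $t_i$, and by size $k_{i+1}$ its size at time $t_{i+1}$+ countdelay. Then, $k_{i+1} \geq X^2 \cdot k_{i}$.
   Context: A broadcast network is modeled as a connected graph G(V,E) with n nodes. In the fragment-level leader election algorithm, nodes are partitioned into fragments each with a candidate; id(F) = (size, candidate identity) ordered lexicographically (by size, then identity); an external edge between F1 and F2 with id(F1) > id(F2) is outgoing for F1 and incoming for F2. Initially each node is a size-1 fragment in state wait. A fragment with an outgoing edge is in wait; a fragment in wait whose external edges are all incoming moves to work, where during a delay countdelay it counts its current size new_size, and compares with its maximal neighbor F': if new_size > X · size(F') (X > 1 a parameter) it remains active, updates its size, makes all external edges outgoing and returns to wait; otherwise it joins F'. A fragment with no external edges is the leader. It has been shown that a fragment that was in work and remained active re-enters work only after each of its neighboring fragments has been in the work state. *)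

theory Defs
  imports Complex_Main
begin

text \<open>Fragment-level model of the leader election algorithm.  A fragment is
  represented by its candidate c (a node with frag c = c); every node v belongs
  to the fragment of candidate frag v.  fsize c is the known size of the
  fragment of candidate c, working c says whether that fragment is in state
  work (otherwise it is in state wait).  The work state lasts from a start
  step to a finish step; the size counted during countdelay is the number
  of nodes of the fragment at the finish step.\<close>

record 'v conf =
  frag :: "'v \<Rightarrow> 'v"
  fsize :: "'v \<Rightarrow> nat"
  working :: "'v \<Rightarrow> bool"

definition broadcast_graph :: "'v set \<Rightarrow> ('v \<Rightarrow> 'v \<Rightarrow> bool) \<Rightarrow> bool" where
  "broadcast_graph V E \<longleftrightarrow> finite V \<and> V \<noteq> {} \<and>
     (\<forall>u v. E u v \<longrightarrow> u \<in> V \<and> v \<in> V \<and> u \<noteq> v \<and> E v u) \<and>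
     (\<forall>u\<in>V. \<forall>v\<in>V. E\<^sup>*\<^sup>* u v)"

definition is_cand :: "'v set \<Rightarrow> 'v conf \<Rightarrow> 'v \<Rightarrow> bool" where
  "is_cand V s c \<longleftrightarrow> c \<in> V \<and> frag s c = c"

definition fnodes :: "'v set \<Rightarrow> 'v conf \<Rightarrow> 'v \<Rightarrow> 'v set" where
  "fnodes V s c = {v \<in> V. frag s v = c}"

definition id_less :: "('v::linorder) conf \<Rightarrow> 'v \<Rightarrow> 'v \<Rightarrow> bool" where
  "id_less s c d \<longleftrightarrow> fsize s c < fsize s d \<or> (fsize s c = fsize s d \<and> c < d)"

definition frag_adj :: "'v set \<Rightarrow> ('v \<Rightarrow> 'v \<Rightarrow> bool) \<Rightarrow> 'v conf \<Rightarrow> 'v \<Rightarrow> 'v \<Rightarrow> bool" where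
  "frag_adj V E s c d \<longleftrightarrow> c \<noteq> d \<and> is_cand V s c \<and> is_cand V s d \<and>
     (\<exists>u v. u \<in> V \<and> v \<in> V \<and> E u v \<and> frag s u = c \<and> frag s v = d)"

definition has_external :: "'v set \<Rightarrow> ('v \<Rightarrow> 'v \<Rightarrow> bool) \<Rightarrow> 'v conf \<Rightarrow> 'v \<Rightarrow> bool" where
  "has_external V E s c \<longleftrightarrow> (\<exists>d. frag_adj V E s c d)"

definition all_incoming :: "'v set \<Rightarrow> ('v \<Rightarrow> 'v \<Rightarrow> bool) \<Rightarrow> ('v::linorder) conf \<Rightarrow> 'v \<Rightarrow> bool" where
  "all_incoming V E s c \<longleftrightarrow> (\<forall>d. frag_adj V E s c d \<longrightarrow> id_less s c d)"

definition max_nbr :: "'v set \<Rightarrow> ('v \<Rightarrow> 'v \<Rightarrow> bool) \<Rightarrow> ('v::linorder) conf \<Rightarrow> 'v \<Rightarrow> 'v" where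
  "max_nbr V E s c = (THE d. frag_adj V E s c d \<and>
      (\<forall>d'. frag_adj V E s c d' \<longrightarrow> d' = d \<or> id_less s d' d))"

definition init_conf :: "'v conf" where
  "init_conf = \<lparr>frag = (\<lambda>v. v), fsize = (\<lambda>_. 1), working = (\<lambda>_. False)\<rparr>"

definition start_work :: "'v set \<Rightarrow> ('v \<Rightarrow> 'v \<Rightarrow> bool) \<Rightarrow> ('v::linorder) conf \<Rightarrow> 'v \<Rightarrow> 'v conf \<Rightarrow> bool" where
  "start_work V E s c s' \<longleftrightarrow> is_cand V s c \<and> \<not> working s c \<and> has_external V E s c \<and>
     all_incoming V E s c \<and> s' = s\<lparr>working := (working s)(c := True)\<rparr>"

definition finish_active :: "'v set \<Rightarrow> ('v \<Rightarrow> 'v \<Rightarrow> bool) \<Rightarrow> real \<Rightarrow> ('v::linorder) conf \<Rightarrow> 'v \<Rightarrow> 'v conf \<Rightarrow> bool" where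
  "finish_active V E X s c s' \<longleftrightarrow> is_cand V s c \<and> working s c \<and> has_external V E s c \<and>
     real (card (fnodes V s c)) > X * real (fsize s (max_nbr V E s c)) \<and>
     s' = s\<lparr>fsize := (fsize s)(c := card (fnodes V s c)), working := (working s)(c := False)\<rparr>"

definition finish_join :: "'v set \<Rightarrow> ('v \<Rightarrow> 'v \<Rightarrow> bool) \<Rightarrow> real \<Rightarrow> ('v::linorder) conf \<Rightarrow> 'v \<Rightarrow> 'v conf \<Rightarrow> bool" where
  "finish_join V E X s c s' \<longleftrightarrow> is_cand V s c \<and> working s c \<and> has_external V E s c \<and>
     \<not> (real (card (fnodes V s c)) > X * real (fsize s (max_nbr V E s c))) \<and>
     s' = s\<lparr>frag := (\<lambda>v. if frag s v = c then max_nbr V E s c else frag s v),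
            working := (working s)(c := False)\<rparr>"

definition alg_step :: "'v set \<Rightarrow> ('v \<Rightarrow> 'v \<Rightarrow> bool) \<Rightarrow> real \<Rightarrow> ('v::linorder) conf \<Rightarrow> 'v conf \<Rightarrow> bool" where
  "alg_step V E X s s' \<longleftrightarrow> (\<exists>c. start_work V E s c s' \<or> finish_active V E X s c s' \<or> finish_join V E X s c s')"

definition execution :: "'v set \<Rightarrow> ('v \<Rightarrow> 'v \<Rightarrow> bool) \<Rightarrow> real \<Rightarrow> (nat \<Rightarrow> ('v::linorder) conf) \<Rightarrow> bool" where
  "execution V E X r \<longleftrightarrow> r 0 = init_conf \<and> (\<forall>t. alg_step V E X (r t) (r (Suc t)) \<or> r (Suc t) = r t)"

definition enters_work :: "(nat \<Rightarrow> 'v conf) \<Rightarrow> 'v \<Rightarrow> nat \<Rightarrow> bool" where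
  "enters_work r c t \<longleftrightarrow> \<not> working (r t) c \<and> working (r (Suc t)) c"

end

theory Submission
  imports Defs "HOL-Library.Product_Lexorder"
begin

text \<open>A fragment in work is a candidate all of whose neighbours have a larger id.
  This invariant survives every step because a fragment that remains active grows
  beyond X times its maximal neighbour, hence (X \<ge> 1) beyond every neighbour.
  So when F finishes work and remains active, its new size exceeds
  X \<cdot> size(F') \<ge> X \<cdot> size(F). The known size of F changes only when F leaves work,
  and between t_i and t_(i+1) + countdelay it leaves work, remaining active, twice.\<close>

lemma id_less_iff_lex: "id_less s a b \<longleftrightarrow> (fsize s a, a) < (fsize s b, b)"
  by (auto simp: id_less_def less_prod_def)

lemma id_less_asym: "id_less s a b \<Longrightarrow> \<not> id_less s b a"
  by (auto simp: id_less_def)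

lemma frag_adj_sym: "symp E \<Longrightarrow> frag_adj V E s c d \<Longrightarrow> frag_adj V E s d c"
  unfolding frag_adj_def by (blast dest: sympD)

lemma ex_id_greatest_nbr:
  fixes s :: "('v::linorder) conf"
  assumes "finite V" and "has_external V E s c"
  shows "\<exists>m. frag_adj V E s c m \<and> (\<forall>d. frag_adj V E s c d \<longrightarrow> d = m \<or> id_less s d m)"
proof -
  let ?A = "{d. frag_adj V E s c d}" and ?key = "\<lambda>d. (fsize s d, d)"
  have "?A \<subseteq> V"
    by (auto simp: frag_adj_def is_cand_def)
  then have fin: "finite (?key ` ?A)"
    using \<open>finite V\<close> finite_subset by blast
  have "?key ` ?A \<noteq> {}"
    using \<open>has_external V E s c\<close> by (auto simp: has_external_def)
  then obtain m where "m \<in> ?A" and "?key m = Max (?key ` ?A)"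
    using Max_in[OF fin] by auto
  then have "\<forall>d\<in>?A. ?key d \<le> ?key m"
    using fin by simp
  then show ?thesis
    using \<open>m \<in> ?A\<close> by (auto simp: id_less_iff_lex order.order_iff_strict)
qed

lemma
  fixes s :: "('v::linorder) conf"
  assumes "finite V" and "has_external V E s c"
  shows max_nbr_adj: "frag_adj V E s c (max_nbr V E s c)"
    and max_nbr_greatest:
      "frag_adj V E s c d \<Longrightarrow> d = max_nbr V E s c \<or> id_less s d (max_nbr V E s c)"
proof -
  obtain m where m: "frag_adj V E s c m \<and> (\<forall>d. frag_adj V E s c d \<longrightarrow> d = m \<or> id_less s d m)"
    using ex_id_greatest_nbr[OF assms] by blast
  have "max_nbr V E s c = m"
    unfolding max_nbr_def by (rule the_equality) (use m id_less_asym in blast)+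
  then show "frag_adj V E s c (max_nbr V E s c)"
    and "frag_adj V E s c d \<Longrightarrow> d = max_nbr V E s c \<or> id_less s d (max_nbr V E s c)"
    using m by auto
qed

definition working_inv :: "'v set \<Rightarrow> ('v \<Rightarrow> 'v \<Rightarrow> bool) \<Rightarrow> ('v::linorder) conf \<Rightarrow> bool" where
  "working_inv V E s \<longleftrightarrow> (\<forall>c. working s c \<longrightarrow> is_cand V s c \<and> all_incoming V E s c)"

lemma working_inv_init: "working_inv V E init_conf"
  by (simp add: working_inv_def init_conf_def)

lemma working_inv_start_work:
  assumes "working_inv V E s" and "start_work V E s c0 s'"
  shows "working_inv V E s'"
  using assms
  by (auto simp: working_inv_def start_work_def all_incoming_def frag_adj_def is_cand_def id_less_def)

lemma working_inv_finish_active: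
  fixes s :: "('v::linorder) conf"
  assumes "1 \<le> X" and "finite V" and "symp E"
    and inv: "working_inv V E s" and fa: "finish_active V E X s c0 s'"
  shows "working_inv V E s'"
  unfolding working_inv_def
proof (intro allI impI)
  let ?m = "max_nbr V E s c0"
  fix c
  assume "working s' c"
  then have "c \<noteq> c0" and "working s c"
    using fa by (auto simp: finish_active_def split: if_splits)
  then have cand: "is_cand V s c" and incoming: "all_incoming V E s c"
    using inv by (auto simp: working_inv_def)
  have same_frag: "frag s' = frag s" and fsize_c: "fsize s' c = fsize s c"
    using fa \<open>c \<noteq> c0\<close> by (auto simp: finish_active_def)
  have adj: "frag_adj V E s' c d = frag_adj V E s c d" for d
    by (simp add: frag_adj_def is_cand_def same_frag)
  have "id_less s' c d" if "frag_adj V E s c d" for d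
  proof (cases "d = c0")
    case True
    have ext: "has_external V E s c0"
      using fa by (simp add: finish_active_def)
    have "c = ?m \<or> id_less s c ?m"
      using max_nbr_greatest[OF \<open>finite V\<close> ext] frag_adj_sym[OF \<open>symp E\<close> that] True by simp
    then have "real (fsize s c) \<le> real (fsize s ?m)"
      by (auto simp: id_less_def)
    also have "\<dots> \<le> X * real (fsize s ?m)"
      using \<open>1 \<le> X\<close> by (simp add: mult_le_cancel_right1)
    also have "\<dots> < real (fsize s' c0)"
      using fa by (simp add: finish_active_def)
    finally show ?thesis
      using True fsize_c by (simp add: id_less_def)
  next
    case False
    then show ?thesis
      using that incoming fa \<open>c \<noteq> c0\<close> by (auto simp: all_incoming_def id_less_def finish_active_def)
  qed
  then show "is_cand V s' c \<and> all_incoming V E s' c"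
    using cand by (simp add: is_cand_def all_incoming_def adj same_frag)
qed

lemma frag_adj_after_join:
  assumes merged: "frag s' = (\<lambda>v. if frag s v = c0 then m else frag s v)"
    and "is_cand V s c" and "is_cand V s c0" and "is_cand V s m" and "c \<noteq> c0" and "c \<noteq> m"
    and "frag_adj V E s' c d"
  shows "(d = m \<and> frag_adj V E s c c0) \<or> frag_adj V E s c d"
proof -
  obtain u v where "u \<in> V" "v \<in> V" "E u v" "frag s' u = c" "frag s' v = d"
    and "d \<noteq> c" and "is_cand V s' d"
    using \<open>frag_adj V E s' c d\<close> by (auto simp: frag_adj_def)
  have "frag s u = c"
    using \<open>frag s' u = c\<close> \<open>c \<noteq> m\<close> by (simp add: merged split: if_splits)
  show ?thesis
  proof (cases "frag s v = c0")
    case True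
    then show ?thesis
      using assms \<open>frag s' v = d\<close> \<open>frag s u = c\<close> \<open>u \<in> V\<close> \<open>v \<in> V\<close> \<open>E u v\<close>
      by (auto simp: frag_adj_def)
  next
    case False
    have "is_cand V s d"
      using \<open>is_cand V s' d\<close> \<open>is_cand V s m\<close> by (auto simp: is_cand_def merged split: if_splits)
    then show ?thesis
      using assms False \<open>frag s' v = d\<close> \<open>frag s u = c\<close> \<open>d \<noteq> c\<close> \<open>u \<in> V\<close> \<open>v \<in> V\<close> \<open>E u v\<close>
      by (auto simp: frag_adj_def)
  qed
qed

lemma working_inv_finish_join:
  fixes s :: "('v::linorder) conf"
  assumes "finite V" and "symp E"
    and inv: "working_inv V E s" and fj: "finish_join V E X s c0 s'"
  shows "working_inv V E s'"
  unfolding working_inv_def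
proof (intro allI impI)
  let ?m = "max_nbr V E s c0"
  fix c
  assume "working s' c"
  then have "c \<noteq> c0" and "working s c"
    using fj by (auto simp: finish_join_def split: if_splits)
  then have cand: "is_cand V s c" and incoming: "all_incoming V E s c"
    using inv by (auto simp: working_inv_def)
  have "working s c0" and cand0: "is_cand V s c0" and ext: "has_external V E s c0"
    and merged: "frag s' = (\<lambda>v. if frag s v = c0 then ?m else frag s v)"
    and same_fsize: "fsize s' = fsize s"
    using fj by (auto simp: finish_join_def)
  then have incoming0: "all_incoming V E s c0"
    using inv by (auto simp: working_inv_def)
  have adj_m: "frag_adj V E s c0 ?m"
    using max_nbr_adj[OF \<open>finite V\<close> ext] .
  then have cand_m: "is_cand V s ?m"
    by (simp add: frag_adj_def)
  have "c \<noteq> ?m"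
  proof
    assume "c = ?m"
    then have "id_less s c0 c" and "id_less s c c0"
      using adj_m frag_adj_sym[OF \<open>symp E\<close> adj_m] incoming0 incoming
      by (auto simp: all_incoming_def)
    then show False
      using id_less_asym by blast
  qed
  have "id_less s' c d" if "frag_adj V E s' c d" for d
    using frag_adj_after_join[OF merged cand cand0 cand_m \<open>c \<noteq> c0\<close> \<open>c \<noteq> ?m\<close> that]
  proof
    assume "d = ?m \<and> frag_adj V E s c c0"
    then show ?thesis
      using max_nbr_greatest[OF \<open>finite V\<close> ext] frag_adj_sym[OF \<open>symp E\<close>] \<open>c \<noteq> ?m\<close>
      by (fastforce simp: id_less_def same_fsize)
  next
    assume "frag_adj V E s c d"
    then show ?thesis
      using incoming by (simp add: all_incoming_def id_less_def same_fsize)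
  qed
  moreover have "is_cand V s' c"
    using cand \<open>c \<noteq> c0\<close> by (simp add: is_cand_def merged)
  ultimately show "is_cand V s' c \<and> all_incoming V E s' c"
    by (simp add: all_incoming_def)
qed

lemma working_inv_step:
  fixes s :: "('v::linorder) conf"
  assumes "1 \<le> X" and "finite V" and "symp E"
    and "working_inv V E s" and "alg_step V E X s s'"
  shows "working_inv V E s'"
proof -
  obtain c0 where "start_work V E s c0 s' \<or> finish_active V E X s c0 s' \<or> finish_join V E X s c0 s'"
    using \<open>alg_step V E X s s'\<close> by (auto simp: alg_step_def)
  then show ?thesis
    using working_inv_start_work working_inv_finish_active[OF assms(1-4)]
      working_inv_finish_join[OF assms(2-4)] assms(4)
    by blast
qed

lemma execution_step:
  "execution V E X r \<Longrightarrow> alg_step V E X (r t) (r (Suc t)) \<or> r (Suc t) = r t"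
  by (simp add: execution_def)

lemma working_inv_execution:
  assumes "1 \<le> X" and "finite V" and "symp E" and "execution V E X r"
  shows "working_inv V E (r t)"
proof (induction t)
  case 0
  then show ?case
    using \<open>execution V E X r\<close> working_inv_init by (simp add: execution_def)
next
  case (Suc t)
  then show ?case
    using execution_step[OF \<open>execution V E X r\<close>, of t] working_inv_step[OF assms(1-3) Suc]
    by auto
qed

lemma fsize_step_unchanged:
  assumes "alg_step V E X s s'" and "working s c \<longrightarrow> working s' c"
  shows "fsize s' c = fsize s c"
  using assms
  by (auto simp: alg_step_def start_work_def finish_active_def finish_join_def split: if_splits)

lemma alg_step_leaving_work:
  assumes "alg_step V E X s s'" and "working s c" and "\<not> working s' c"
  shows "finish_active V E X s c s' \<or> finish_join V E X s c s'"
proof -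
  obtain c0 where step: "start_work V E s c0 s' \<or> finish_active V E X s c0 s' \<or> finish_join V E X s c0 s'"
    using assms(1) by (auto simp: alg_step_def)
  then obtain b where "working s' = (working s)(c0 := b)"
    by (auto simp: start_work_def finish_active_def finish_join_def)
  then have "c0 = c"
    using assms(2,3) by (metis fun_upd_apply)
  then show ?thesis
    using step assms(2) by (auto simp: start_work_def)
qed

text \<open>A fragment that leaves work and joins its maximal neighbour is no longer a candidate,
  so a candidate leaving work has remained active.\<close>
lemma fsize_step_grows:
  fixes s :: "('v::linorder) conf"
  assumes "0 \<le> X" and "finite V" and "working_inv V E s" and step: "alg_step V E X s s'"
    and "working s c" and "\<not> working s' c" and "is_cand V s' c"
  shows "X * real (fsize s c) < real (fsize s' c)"
proof -
  have cand: "is_cand V s c" and incoming: "all_incoming V E s c"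
    using assms(3,5) by (auto simp: working_inv_def)
  have leave: "finish_active V E X s c s' \<or> finish_join V E X s c s'"
    using alg_step_leaving_work[OF step \<open>working s c\<close> \<open>\<not> working s' c\<close>] .
  then have ext: "has_external V E s c"
    by (auto simp: finish_active_def finish_join_def)
  let ?m = "max_nbr V E s c"
  have adj_m: "frag_adj V E s c ?m"
    using max_nbr_adj[OF \<open>finite V\<close> ext] .
  show ?thesis
    using leave
  proof
    assume fa: "finish_active V E X s c s'"
    have "fsize s c \<le> fsize s ?m"
      using adj_m incoming by (auto simp: all_incoming_def id_less_def)
    then have "X * real (fsize s c) \<le> X * real (fsize s ?m)"
      using \<open>0 \<le> X\<close> by (simp add: mult_left_mono)
    also have "\<dots> < real (fsize s' c)"
      using fa by (simp add: finish_active_def)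
    finally show ?thesis .
  next
    assume "finish_join V E X s c s'"
    then have "frag s' c = ?m"
      using cand by (simp add: finish_join_def is_cand_def)
    moreover have "?m \<noteq> c"
      using adj_m by (auto simp: frag_adj_def)
    ultimately show ?thesis
      using \<open>is_cand V s' c\<close> by (simp add: is_cand_def)
  qed
qed

definition leaves_work :: "(nat \<Rightarrow> 'v conf) \<Rightarrow> 'v \<Rightarrow> nat \<Rightarrow> bool" where
  "leaves_work r c t \<longleftrightarrow> working (r t) c \<and> \<not> working (r (Suc t)) c"

lemma fsize_execution_unchanged:
  assumes "execution V E X r" and "a \<le> b"
    and "\<forall>t. a \<le> t \<and> t < b \<longrightarrow> \<not> leaves_work r c t"
  shows "fsize (r b) c = fsize (r a) c"
  using \<open>a \<le> b\<close> assms(3)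
proof (induction b rule: dec_induct)
  case (step t)
  then show ?case
    using execution_step[OF \<open>execution V E X r\<close>, of t] fsize_step_unchanged
    by (fastforce simp: leaves_work_def)
qed simp

lemma fsize_execution_grows:
  assumes "1 \<le> X" and "finite V" and "symp E" and "execution V E X r"
    and "leaves_work r c t" and "is_cand V (r (Suc t)) c"
  shows "X * real (fsize (r t) c) < real (fsize (r (Suc t)) c)"
proof -
  have "alg_step V E X (r t) (r (Suc t))"
    using execution_step[OF \<open>execution V E X r\<close>, of t] \<open>leaves_work r c t\<close>
    by (auto simp: leaves_work_def)
  moreover have "0 \<le> X"
    using \<open>1 \<le> X\<close> by simp
  ultimately show ?thesis
    using fsize_step_grows[OF _ \<open>finite V\<close> working_inv_execution[OF assms(1-4)]] assms(5,6)
    by (simp add: leaves_work_def)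
qed

lemma not_working_until_enters_work:
  assumes "\<not> working (r a) c" and "a \<le> b"
    and "\<forall>t. a \<le> t \<and> t < b \<longrightarrow> \<not> enters_work r c t"
  shows "\<not> working (r b) c"
  using \<open>a \<le> b\<close> assms(3)
proof (induction b rule: dec_induct)
  case base
  show ?case using \<open>\<not> working (r a) c\<close> .
next
  case (step t)
  then show ?case
    by (auto simp: enters_work_def)
qed

theorem lemma4:
  fixes V :: "('v::linorder) set" and E :: "'v \<Rightarrow> 'v \<Rightarrow> bool" and X :: real
    and r :: "nat \<Rightarrow> 'v conf" and c :: 'v and t1 t2 t3 t4 :: nat
  assumes "broadcast_graph V E" and "X > 1" and "execution V E X r"
    and "enters_work r c t1" and "enters_work r c t3" and "t1 < t3"
    and "\<forall>t. t1 < t \<and> t < t3 \<longrightarrow> \<not> enters_work r c t"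
    and "t1 < t2" and "t2 < t3"
    and "\<forall>t. t1 < t \<and> t \<le> t2 \<longrightarrow> working (r t) c"
    and "\<not> working (r (Suc t2)) c" and "is_cand V (r (Suc t2)) c"
    and "t3 < t4"
    and "\<forall>t. t3 < t \<and> t \<le> t4 \<longrightarrow> working (r t) c"
    and "\<not> working (r (Suc t4)) c" and "is_cand V (r (Suc t4)) c"
  shows "real (fsize (r (Suc t4)) c) \<ge> X ^ 2 * real (fsize (r t1) c)"
proof -
  note execution = \<open>execution V E X r\<close>
  have X: "1 \<le> X"
    using \<open>X > 1\<close> by simp
  have fin: "finite V" and sym: "symp E"
    using \<open>broadcast_graph V E\<close> by (auto simp: broadcast_graph_def intro: sympI)
  note grows = fsize_execution_grows[OF X fin sym execution]
  have size_t2: "fsize (r t2) c = fsize (r t1) c"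
    using fsize_execution_unchanged[OF execution, of t1 t2 c] assms(8,10)
    by (auto simp: leaves_work_def)
  have grow1: "X * real (fsize (r t2) c) < real (fsize (r (Suc t2)) c)"
    using grows[of c t2] assms(8,10-12) by (simp add: leaves_work_def)
  have idle: "\<not> working (r t) c" if "Suc t2 \<le> t" and "t \<le> t3" for t
    using not_working_until_enters_work[of r "Suc t2" c t] that assms(7,8,11) by simp
  have "fsize (r t3) c = fsize (r (Suc t2)) c"
    using fsize_execution_unchanged[OF execution, of "Suc t2" t3 c] idle assms(9)
    by (simp add: leaves_work_def)
  then have size_t4: "fsize (r t4) c = fsize (r (Suc t2)) c"
    using fsize_execution_unchanged[OF execution, of t3 t4 c] assms(13,14)
    by (auto simp: leaves_work_def)
  have grow2: "X * real (fsize (r t4) c) < real (fsize (r (Suc t4)) c)"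
    using grows[of c t4] assms(13-16) by (simp add: leaves_work_def)
  have "X ^ 2 * real (fsize (r t1) c) = X * (X * real (fsize (r t2) c))"
    by (simp add: size_t2 power2_eq_square)
  also have "\<dots> \<le> X * real (fsize (r t4) c)"
    using grow1 X by (simp add: size_t4)
  also have "\<dots> < real (fsize (r (Suc t4)) c)"
    using grow2 .
  finally show ?thesis
    by simp
qed

end
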